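(* Let $F$ be a smooth distribution supported on $[0,1]$ whose CDF is convex (equivalently, whose PDF $f$ is non-decreasing). Then $\tilde{O}(\epsilon^{-1/2})$ oracle queries to $F$ and $f$ suffice to learn $F$ within Lévy distance $O(\epsilon)$.
   Context: A distribution is smooth if it has no point masses and a PDF $f$ of class $C^1$. Oracle query model: an algorithm adaptively chooses points $x$ and receives the exact values $F(x)$ and/or $f(x)$; after its queries it must output a distribution $\hat F$ with $\mathrm{L\acute{e}vy}(F,\hat F)$ at most the target accuracy, where $\mathrm{L\acute{e}vy}(F,G)=\inf\{\epsilon: F(v-\epsilon)-\epsilon\le G(v)\le F(v+\epsilon)+\epsilon\ \forall v\}$. $\tilde{O}$ hides polylog$(1/\epsilon)$ factors. *)

theory Defs
  imports "HOL-Analysis.Analysis"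
begin

definition smooth_dist_01 :: "(real \<Rightarrow> real) \<Rightarrow> (real \<Rightarrow> real) \<Rightarrow> bool" where
  "smooth_dist_01 F f \<longleftrightarrow>
     (\<forall>x. 0 \<le> f x) \<and>
     (\<forall>x. x \<notin> {0..1} \<longrightarrow> f x = 0) \<and>
     (\<exists>f'. (\<forall>x\<in>{0..1}. (f has_real_derivative f' x) (at x within {0..1}))
           \<and> continuous_on {0..1} f') \<and>
     (\<forall>x. x < 0 \<longrightarrow> F x = 0) \<and>
     (\<forall>x. 1 < x \<longrightarrow> F x = 1) \<and>
     (\<forall>x\<in>{0..1}. (f has_integral F x) {0..x}) \<and>
     F 1 = 1"

definition is_cdf :: "(real \<Rightarrow> real) \<Rightarrow> bool" where
  "is_cdf G \<longleftrightarrow> mono G \<and> (G \<longlongrightarrow> 0) at_bot \<and> (G \<longlongrightarrow> 1) at_top \<and>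
     (\<forall>x. continuous (at_right x) G)"

definition levy :: "(real \<Rightarrow> real) \<Rightarrow> (real \<Rightarrow> real) \<Rightarrow> real" where
  "levy F G = Inf {e. \<forall>v. F (v - e) - e \<le> G v \<and> G v \<le> F (v + e) + e}"

text \<open>Deterministic adaptive oracle algorithm: Q maps the history of
  (query point, F value, f value) triples to the next query point.
  run Q F f n is the history after n queries.\<close>
fun run :: "((real \<times> real \<times> real) list \<Rightarrow> real) \<Rightarrow> (real \<Rightarrow> real) \<Rightarrow> (real \<Rightarrow> real)
             \<Rightarrow> nat \<Rightarrow> (real \<times> real \<times> real) list" where
  "run Q F f 0 = []"
| "run Q F f (Suc n) = (let h = run Q F f n; x = Q h in h @ [(x, F x, f x)])"

end

theory Submission
  imports Defs
begin

text \<open>A convex CDF lies above each of its tangents, and the tangent at a sample point p is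
  accurate to e at every v >= p with (f v - f p) (v - p) <= e. Hence the upper envelope of the
  sampled tangents is within Levy distance e of F once every v in [0,1) is e-close to a sample
  point p <= v or lies in the accurate range of the tangent at p. The learner walks from 0 in steps
  of length sqrt e / (1 + f a). If f stays below f a + sqrt e (1 + f a) on a step, the tangent at a
  covers it; otherwise log2 (1/e) bisections locate the crossing of that threshold up to e. The
  potential (a + F a) / sqrt e + ln (1 + f a) / ln (1 + sqrt e) is O(e^(-1/2) log (1/e)) and grows
  by one with every step and every crossing, so O(e^(-1/2) log (1/e)^2) queries suffice.\<close>

lemma convex_on_Icc_above_tangent:
  fixes g :: "real \<Rightarrow> real"
  assumes convex: "convex_on {a..b} g" and c: "c \<in> {a..b}" and x: "x \<in> {a..b}"
    and deriv: "(g has_field_derivative d) (at c within {a..b})"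
  shows "g c + d * (x - c) \<le> g x"
proof -
  define slope where "slope y = (g y - g c) / (y - c)" for y
  have lim: "(slope \<longlongrightarrow> d) (at c within S)" if "S \<subseteq> {a..b}" for S
    using deriv that unfolding has_field_derivative_iff slope_def by (blast intro: tendsto_mono at_le)
  have slope_swap: "(g c - g y) / (c - y) = slope y" for y
    by (metis minus_diff_eq minus_divide_divide slope_def)
  show ?thesis
  proof (cases x c rule: linorder_cases)
    case greater
    have "at c within {c<..x} \<noteq> bot"
      using greater by (simp add: at_within_eq_bot_iff)
    moreover have "\<forall>\<^sub>F y in at c within {c<..x}. slope y \<le> slope x"
      unfolding eventually_at_filter
    proof (rule always_eventually, intro allI impI)
      fix y assume "y \<noteq> c" "y \<in> {c<..x}"
      then show "slope y \<le> slope x"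
        using convex_on_slope_le(1)[OF convex c x, of y] by (cases "y = x") (auto simp: slope_swap)
    qed
    moreover have "(slope \<longlongrightarrow> d) (at c within {c<..x})"
      using c x by (intro lim) auto
    ultimately have "d \<le> slope x"
      by (metis tendsto_upperbound)
    then show ?thesis using greater by (simp add: slope_def field_simps)
  next
    case less
    have "at c within {x..<c} \<noteq> bot"
      using less by (simp add: at_within_eq_bot_iff)
    moreover have "\<forall>\<^sub>F y in at c within {x..<c}. slope x \<le> slope y"
      unfolding eventually_at_filter
    proof (rule always_eventually, intro allI impI)
      fix y assume "y \<noteq> c" "y \<in> {x..<c}"
      then show "slope x \<le> slope y"
        using convex_on_slope_le(2)[OF convex x c, of y] by (cases "y = x") (auto simp: slope_def)
    qed
    moreover have "(slope \<longlongrightarrow> d) (at c within {x..<c})"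
      using c x by (intro lim) auto
    ultimately have "slope x \<le> d"
      by (metis tendsto_lowerbound)
    then show ?thesis using less by (simp add: slope_def field_simps)
  qed simp
qed

lemma divide_add_one_le:
  fixes c x y :: real
  assumes "0 < c" "x + c \<le> y"
  shows "x / c + 1 \<le> y / c"
proof -
  have "x / c + 1 = (x + c) / c"
    using assms by (simp add: field_simps)
  then show ?thesis
    using assms by (simp add: divide_right_mono)
qed

lemma ln_one_plus_ge_half:
  fixes r :: real
  assumes "0 \<le> r" "r \<le> 1"
  shows "r / 2 \<le> ln (1 + r)"
proof -
  have "- ln (1 + r) = ln (1 / (1 + r))"
    using assms by (simp add: ln_div)
  also have "\<dots> \<le> 1 / (1 + r) - 1"
    using assms by (intro ln_le_minus_one) simp
  also have "\<dots> \<le> - (r / 2)"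
    using assms mult_left_le[of r r] by (simp add: field_simps)
  finally show ?thesis by simp
qed

lemma le_two_power_ceiling_log:
  fixes x :: real
  assumes "0 < x"
  shows "x \<le> 2 ^ nat \<lceil>log 2 x\<rceil>"
proof -
  have "log 2 x \<le> real (nat \<lceil>log 2 x\<rceil>)"
    by linarith
  then show ?thesis
    using assms by (simp add: log_le_iff powr_realpow)
qed

lemma levy_le:
  fixes F G :: "real \<Rightarrow> real"
  assumes F01: "\<And>x. F x \<in> {0..1}"
    and lower: "\<And>v. F (v - e) - e \<le> G v" and upper: "\<And>v. G v \<le> F (v + e) + e"
  shows "levy F G \<le> e"
  unfolding levy_def
proof (rule cInf_lower)
  show "e \<in> {e. \<forall>v. F (v - e) - e \<le> G v \<and> G v \<le> F (v + e) + e}"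
    using lower upper by blast
  show "bdd_below {e. \<forall>v. F (v - e) - e \<le> G v \<and> G v \<le> F (v + e) + e}"
  proof (rule bdd_belowI)
    fix d assume "d \<in> {e. \<forall>v. F (v - e) - e \<le> G v \<and> G v \<le> F (v + e) + e}"
    then have "F (0 - d) - d \<le> G 0" "G 0 \<le> F (0 + d) + d" by blast+
    then show "- 1 / 2 \<le> d" using F01[of "-d"] F01[of d] by simp
  qed
qed

locale convex_smooth_dist =
  fixes F f :: "real \<Rightarrow> real"
  assumes smooth: "smooth_dist_01 F f" and convex: "convex_on {0..1} F"
begin

lemma pdf_nonneg: "0 \<le> f x"
  using smooth by (simp add: smooth_dist_01_def)

lemma pdf_continuous_on: "continuous_on {0..1} f"
proof -
  obtain f' where "\<forall>x\<in>{0..1}. (f has_real_derivative f' x) (at x within {0..1})"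
    using smooth unfolding smooth_dist_01_def by blast
  then show ?thesis
    unfolding continuous_on_eq_continuous_within using DERIV_continuous by metis
qed

lemma cdf_eq_integral: "x \<in> {0..1} \<Longrightarrow> F x = integral {0..x} f"
  using smooth unfolding smooth_dist_01_def by (metis integral_unique)

lemma cdf_has_real_derivative:
  assumes "x \<in> {0..1}"
  shows "(F has_real_derivative f x) (at x within {0..1})"
  using integral_has_real_derivative[OF pdf_continuous_on assms]
  by (rule has_field_derivative_transform_within[where d = 1]) (use assms cdf_eq_integral in auto)

lemma cdf_above_tangent: "c \<in> {0..1} \<Longrightarrow> x \<in> {0..1} \<Longrightarrow> F c + f c * (x - c) \<le> F x"
  using convex_on_Icc_above_tangent[OF convex _ _ cdf_has_real_derivative] by blast

lemma tangent_gap_le: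
  assumes "p \<in> {0..1}" "v \<in> {0..1}"
  shows "F v - (F p + f p * (v - p)) \<le> (f v - f p) * (v - p)"
  using cdf_above_tangent[of v p] assms by (simp add: algebra_simps)

lemma pdf_mono:
  assumes "0 \<le> x" "x \<le> y" "y \<le> 1"
  shows "f x \<le> f y"
proof -
  have "0 \<le> F y - (F x + f x * (y - x))"
    using cdf_above_tangent[of x y] assms by simp
  also have "\<dots> \<le> (f y - f x) * (y - x)"
    using tangent_gap_le[of x y] assms by simp
  finally show ?thesis
    using assms by (cases "x = y") (auto simp: zero_le_mult_iff)
qed

lemma cdf_0: "F 0 = 0"
  using cdf_eq_integral[of 0] by simp

lemma cdf_1: "F 1 = 1"
  using smooth by (simp add: smooth_dist_01_def)

lemma cdf_clamp: "F x = F (max 0 (min 1 x))"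
proof -
  consider "x < 0" | "x \<in> {0..1}" | "1 < x" by fastforce
  then show ?thesis
    using smooth cdf_0 cdf_1 by cases (auto simp: smooth_dist_01_def)
qed

lemma cdf_mono_on: "0 \<le> x \<Longrightarrow> x \<le> y \<Longrightarrow> y \<le> 1 \<Longrightarrow> F x \<le> F y"
  using cdf_above_tangent[of x y] pdf_nonneg[of x] by (smt (verit) atLeastAtMost_iff mult_nonneg_nonneg)

lemma cdf_mono: "x \<le> y \<Longrightarrow> F x \<le> F y"
  by (subst (1 2) cdf_clamp) (rule cdf_mono_on; linarith)

lemma cdf_nonneg: "0 \<le> F x"
  using cdf_mono_on[of 0 "max 0 (min 1 x)"] cdf_0 cdf_clamp[of x] by simp

lemma cdf_le_1: "F x \<le> 1"
  using cdf_mono_on[of "max 0 (min 1 x)" 1] cdf_1 cdf_clamp[of x] by simp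

lemma pdf_gap_le_1: "0 \<le> a \<Longrightarrow> a \<le> 1 \<Longrightarrow> f a * (1 - a) \<le> 1"
  using cdf_above_tangent[of a 1] cdf_1 cdf_nonneg[of a] by simp

end

section \<open>The tangent envelope of a sample history\<close>

type_synonym sample = "real \<times> real \<times> real"

text \<open>Clipping negative slopes and ignoring samples outside [0,1] make the estimate a CDF
  for every history, exact or not.\<close>

definition tangent_line :: "sample \<Rightarrow> real \<Rightarrow> real" where
  "tangent_line p v = fst (snd p) + max 0 (snd (snd p)) * (v - fst p)"

fun tangent_max :: "sample list \<Rightarrow> real \<Rightarrow> real" where
  "tangent_max [] v = 0"
| "tangent_max (p # ps) v =
     (if fst p \<in> {0..1} then max (tangent_line p v) (tangent_max ps v) else tangent_max ps v)"

definition tangent_envelope :: "sample list \<Rightarrow> real \<Rightarrow> real" where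
  "tangent_envelope h v = (if v < 0 then 0 else if 1 \<le> v then 1 else min 1 (tangent_max h v))"

lemma tangent_max_nonneg: "0 \<le> tangent_max h v"
  by (induction h) auto

lemma tangent_line_mono: "v \<le> w \<Longrightarrow> tangent_line p v \<le> tangent_line p w"
  by (simp add: tangent_line_def mult_left_mono)

lemma tangent_max_mono: "v \<le> w \<Longrightarrow> tangent_max h v \<le> tangent_max h w"
proof (induction h)
  case (Cons p ps)
  then show ?case
    using max.mono[OF tangent_line_mono[OF Cons.prems] Cons.IH] by simp
qed simp

lemma isCont_tangent_max: "isCont (tangent_max h) x"
proof (induction h)
  case (Cons p ps)
  then show ?case
    by (cases "fst p \<in> {0..1}") (auto simp: tangent_line_def intro!: continuous_intros)
qed simp

lemma tangent_line_le_tangent_max: "p \<in> set h \<Longrightarrow> fst p \<in> {0..1} \<Longrightarrow> tangent_line p v \<le> tangent_max h v"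
  by (induction h) (auto simp: le_max_iff_disj)

lemma tangent_max_le:
  "(\<And>p. p \<in> set h \<Longrightarrow> fst p \<in> {0..1} \<Longrightarrow> tangent_line p v \<le> M) \<Longrightarrow> 0 \<le> M \<Longrightarrow> tangent_max h v \<le> M"
  by (induction h) auto

lemma mono_tangent_envelope: "mono (tangent_envelope h)"
  unfolding mono_def tangent_envelope_def
  using tangent_max_nonneg tangent_max_mono by (smt (verit))

lemma tangent_envelope_tendsto_at_right:
  "(tangent_envelope h \<longlongrightarrow> tangent_envelope h x) (at_right x)"
proof -
  consider "x < 0" | "x \<in> {0..<1}" | "1 \<le> x" by fastforce
  then show ?thesis
  proof cases
    case 1
    have "\<forall>\<^sub>F y in at_right x. tangent_envelope h y = tangent_envelope h x"
      using eventually_at_right_real[OF 1] by eventually_elim (use 1 in \<open>simp add: tangent_envelope_def\<close>)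
    then show ?thesis by (rule tendsto_eventually)
  next
    case 2
    have "((\<lambda>y. min 1 (tangent_max h y)) \<longlongrightarrow> min 1 (tangent_max h x)) (at_right x)"
      using isCont_tangent_max[where h = h and x = x]
      by (intro tendsto_min tendsto_const) (simp add: isCont_def filterlim_at_split)
    moreover have "\<forall>\<^sub>F y in at_right x. min 1 (tangent_max h y) = tangent_envelope h y"
      using 2 eventually_at_right_real[of x 1] by (auto elim!: eventually_mono simp: tangent_envelope_def)
    ultimately show ?thesis
      using 2 by (simp add: tangent_envelope_def Lim_transform_eventually)
  next
    case 3
    have "\<forall>\<^sub>F y in at_right x. tangent_envelope h y = tangent_envelope h x"
      using eventually_at_right_less[of x] by eventually_elim (use 3 in \<open>simp add: tangent_envelope_def\<close>)
    then show ?thesis by (rule tendsto_eventually)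
  qed
qed

lemma is_cdf_tangent_envelope: "is_cdf (tangent_envelope h)"
  unfolding is_cdf_def
proof (intro conjI allI)
  have "\<forall>\<^sub>F x in at_bot. tangent_envelope h x = 0"
    unfolding eventually_at_bot_linorder by (auto simp: tangent_envelope_def intro!: exI[of _ "-1"])
  then show "(tangent_envelope h \<longlongrightarrow> 0) at_bot" by (rule tendsto_eventually)
  have "\<forall>\<^sub>F x in at_top. tangent_envelope h x = 1"
    unfolding eventually_at_top_linorder by (auto simp: tangent_envelope_def intro!: exI[of _ 1])
  then show "(tangent_envelope h \<longlongrightarrow> 1) at_top" by (rule tendsto_eventually)
qed (simp_all add: mono_tangent_envelope continuous_within tangent_envelope_tendsto_at_right)

definition exact_samples :: "(real \<Rightarrow> real) \<Rightarrow> (real \<Rightarrow> real) \<Rightarrow> sample list \<Rightarrow> bool" where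
  "exact_samples F f h \<longleftrightarrow> (\<forall>p\<in>set h. snd p = (F (fst p), f (fst p)))"

text \<open>By tangent_gap_le, the second alternative makes the tangent at p accurate to e at v.\<close>

definition covered :: "(real \<Rightarrow> real) \<Rightarrow> real \<Rightarrow> sample list \<Rightarrow> real \<Rightarrow> bool" where
  "covered f e h v \<longleftrightarrow>
     (\<exists>p\<in>set h. fst p \<in> {0..v} \<and> (v - fst p \<le> e \<or> (f v - f (fst p)) * (v - fst p) \<le> e))"

context convex_smooth_dist
begin

lemma tangent_line_exact:
  "exact_samples F f h \<Longrightarrow> p \<in> set h \<Longrightarrow> tangent_line p v = F (fst p) + f (fst p) * (v - fst p)"
  using pdf_nonneg by (auto simp: exact_samples_def tangent_line_def)

lemma tangent_max_le_cdf:
  assumes "exact_samples F f h" "v \<in> {0..1}"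
  shows "tangent_max h v \<le> F v"
  using assms cdf_above_tangent cdf_nonneg by (intro tangent_max_le) (auto simp: tangent_line_exact)

lemma cdf_shift_le_tangent_max:
  assumes exact: "exact_samples F f h" and "0 \<le> e" "v \<in> {0..1}" and "covered f e h v"
  shows "F (v - e) - e \<le> tangent_max h v"
proof -
  from \<open>covered f e h v\<close> obtain p where p: "p \<in> set h" "fst p \<in> {0..v}"
    and close: "v - fst p \<le> e \<or> (f v - f (fst p)) * (v - fst p) \<le> e"
    unfolding covered_def by blast
  define x where "x = fst p"
  have "F (v - e) - e \<le> F x + f x * (v - x)"
    using close unfolding x_def[symmetric]
  proof
    assume "v - x \<le> e"
    moreover have "0 \<le> f x * (v - x)"
      using pdf_nonneg[of x] p by (simp add: x_def)
    ultimately show ?thesis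
      using cdf_mono[of "v - e" x] \<open>0 \<le> e\<close> by simp
  next
    assume "(f v - f x) * (v - x) \<le> e"
    then show ?thesis
      using tangent_gap_le[of x v] cdf_mono[of "v - e" v] p \<open>0 \<le> e\<close> \<open>v \<in> {0..1}\<close>
      by (simp add: x_def)
  qed
  also have "\<dots> = tangent_line p v"
    using tangent_line_exact[OF exact p(1)] by (simp add: x_def)
  also have "\<dots> \<le> tangent_max h v"
    using p \<open>v \<in> {0..1}\<close> by (intro tangent_line_le_tangent_max) auto
  finally show ?thesis .
qed

lemma levy_tangent_envelope_le:
  assumes exact: "exact_samples F f h" and "0 \<le> e" and cov: "\<forall>v\<in>{0..<1}. covered f e h v"
  shows "levy F (tangent_envelope h) \<le> e"
proof (rule levy_le)
  fix v :: real
  show "F (v - e) - e \<le> tangent_envelope h v"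
    using cdf_clamp[of "v - e"] cdf_0 cdf_le_1[of "v - e"] tangent_max_nonneg[of h v] \<open>0 \<le> e\<close>
      cdf_shift_le_tangent_max[OF exact \<open>0 \<le> e\<close>, of v] cov
    by (auto simp: tangent_envelope_def)
  show "tangent_envelope h v \<le> F (v + e) + e"
    using cdf_clamp[of "v + e"] cdf_1 cdf_nonneg[of "v + e"] cdf_mono[of v "v + e"] \<open>0 \<le> e\<close>
      tangent_max_le_cdf[OF exact, of v]
    by (auto simp: tangent_envelope_def)
qed (use cdf_nonneg cdf_le_1 in auto)

end

section \<open>The walk-and-bisect learner\<close>

text \<open>In Walk a (f a), everything below the anchor a is covered. In Bisect a (f a) lo hi (f hi) k,
  the step from a overshot the threshold, which f crosses between lo and hi, and k halvings of
  [lo, hi] remain.\<close>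

datatype search_state = Start | Walk real real | Bisect real real real real real nat

definition threshold :: "real \<Rightarrow> real \<Rightarrow> real" where
  "threshold r fa = fa + r * (1 + fa)"

definition next_query :: "real \<Rightarrow> real \<Rightarrow> search_state \<Rightarrow> real" where
  "next_query e r s = (case s of
      Start \<Rightarrow> 0
    | Walk a fa \<Rightarrow> if 1 - e \<le> a then a else min (a + r / (1 + fa)) 1
    | Bisect a fa lo hi fhi k \<Rightarrow> (lo + hi) / 2)"

definition bisect_continue :: "nat \<Rightarrow> real \<Rightarrow> real \<Rightarrow> real \<Rightarrow> real \<Rightarrow> real \<Rightarrow> search_state" where
  "bisect_continue k a fa lo hi fhi = (if k \<le> 1 then Walk hi fhi else Bisect a fa lo hi fhi (k - 1))"

definition next_state :: "real \<Rightarrow> real \<Rightarrow> nat \<Rightarrow> search_state \<Rightarrow> real \<Rightarrow> real \<Rightarrow> search_state" where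
  "next_state e r B s x fx = (case s of
      Start \<Rightarrow> Walk x fx
    | Walk a fa \<Rightarrow>
        if 1 - e \<le> a then Walk a fa
        else if fx \<le> threshold r fa then Walk x fx
        else Bisect a fa a x fx B
    | Bisect a fa lo hi fhi k \<Rightarrow>
        if fx \<le> threshold r fa then bisect_continue k a fa x hi fhi
        else bisect_continue k a fa lo x fx)"

definition state_of :: "real \<Rightarrow> real \<Rightarrow> nat \<Rightarrow> sample list \<Rightarrow> search_state" where
  "state_of e r B h = foldl (\<lambda>s p. next_state e r B s (fst p) (snd (snd p))) Start h"

definition walk_query :: "real \<Rightarrow> real \<Rightarrow> nat \<Rightarrow> sample list \<Rightarrow> real" where
  "walk_query e r B h = next_query e r (state_of e r B h)"

lemma exact_samples_run: "exact_samples F f (run Q F f n)"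
  by (induction n) (auto simp: exact_samples_def Let_def)

lemma run_walk_query_Suc:
  "run (walk_query e r B) F f (Suc n) = run (walk_query e r B) F f n @ [(x, F x, f x)]"
  if "x = next_query e r (state_of e r B (run (walk_query e r B) F f n))"
  using that by (simp add: Let_def walk_query_def)

lemma state_of_snoc: "state_of e r B (h @ [(x, y, z)]) = next_state e r B (state_of e r B h) x z"
  by (simp add: state_of_def)

lemma next_state_not_Start: "next_state e r B s x fx \<noteq> Start"
  by (simp add: next_state_def bisect_continue_def split: search_state.split)

lemma bisect_next_bracket:
  fixes f :: "real \<Rightarrow> real"
  assumes "lo < hi" "f lo \<le> threshold r fa" "threshold r fa < f hi"
  defines "x \<equiv> (lo + hi) / 2"
  obtains lo' hi'
  where "next_state e r B (Bisect a fa lo hi (f hi) k) x (f x) = bisect_continue k a fa lo' hi' (f hi')"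
    and "lo \<le> lo'" "lo' < hi'" "hi' \<le> hi" "hi' - lo' = (hi - lo) / 2"
    and "f lo' \<le> threshold r fa" "threshold r fa < f hi'" "{lo', hi'} \<subseteq> {lo, hi, x}"
proof (cases "f x \<le> threshold r fa")
  case True
  then show ?thesis
    using assms by (intro that[of x hi]) (auto simp: next_state_def x_def field_simps)
next
  case False
  then show ?thesis
    using assms by (intro that[of lo x]) (auto simp: next_state_def x_def field_simps)
qed

locale walk_learner = convex_smooth_dist +
  fixes e r :: real and B :: nat
  assumes e: "0 < e" "e < 1" and r_eq: "r = sqrt e" and B: "1 \<le> B" "1 / e \<le> 2 ^ B"
begin

lemma r_pos: "0 < r"
  using e r_eq by simp

lemma r_le_1: "r \<le> 1"
  using e r_eq by simp

lemma r_square: "r * r = e"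
  using e r_eq by simp

lemma ln_one_plus_r_pos: "0 < ln (1 + r)"
  using r_pos by simp

lemma r_div_two_power_B_le: "r / 2 ^ B \<le> e"
  using B(2) e r_le_1 by (simp add: field_simps)

lemma covered_append: "covered f e h v \<Longrightarrow> covered f e (h @ q) v"
  by (auto simp: covered_def)

lemma covered_near:
  "p \<in> fst ` set h \<Longrightarrow> 0 \<le> p \<Longrightarrow> p \<le> v \<Longrightarrow> v - p \<le> e \<Longrightarrow> covered f e h v"
  by (auto simp: covered_def)

lemma covered_by_anchor:
  assumes "a \<in> fst ` set h" "0 \<le> a" "a \<le> v" "v \<le> 1"
    and "v - a \<le> r / (1 + f a)" "f v \<le> threshold r (f a)"
  shows "covered f e h v"
proof -
  have "(f v - f a) * (v - a) \<le> (r * (1 + f a)) * (r / (1 + f a))"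
    using pdf_mono[of a v] assms by (intro mult_mono) (auto simp: threshold_def)
  also have "\<dots> = e"
    using pdf_nonneg[of a] r_square by (simp add: field_simps)
  moreover obtain p where "p \<in> set h" "fst p = a"
    using assms(1) by auto
  ultimately show ?thesis
    using assms by (auto simp: covered_def intro!: bexI[of _ p])
qed

lemma covered_below_extend:
  assumes "\<forall>v\<in>{0..<a}. covered f e h v" "a \<in> fst ` set h" "lo \<in> fst ` set h"
    and "0 \<le> a" "a \<le> lo" "lo \<le> hi" "hi \<le> 1"
    and "hi - a \<le> r / (1 + f a)" "f lo \<le> threshold r (f a)" "hi - lo \<le> e"
  shows "\<forall>v\<in>{0..<hi}. covered f e h v"
proof
  fix v assume v: "v \<in> {0..<hi}"
  consider "v < a" | "a \<le> v" "v \<le> lo" | "lo < v" by fastforce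
  then show "covered f e h v"
  proof cases
    case 2
    then show ?thesis
      using assms v pdf_mono[of v lo] by (intro covered_by_anchor[of a]) auto
  qed (use assms v covered_near[of lo h v] in auto)
qed

definition potential :: "real \<Rightarrow> real" where
  "potential a = (a + F a) / r + ln (1 + f a) / ln (1 + r)"

lemma potential_walk_step:
  assumes "0 \<le> a" "b = a + r / (1 + f a)" "b \<le> 1"
  shows "potential a + 1 \<le> potential b"
proof -
  have ab: "a \<le> b"
    using assms r_pos pdf_nonneg[of a] by simp
  have "(b - a) + f a * (b - a) = r"
    using assms pdf_nonneg[of a] by (simp add: field_simps)
  then have "a + F a + r \<le> b + F b"
    using cdf_above_tangent[of a b] assms ab by simp
  then have "(a + F a) / r + 1 \<le> (b + F b) / r"
    using r_pos by (intro divide_add_one_le) auto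
  moreover have "ln (1 + f a) \<le> ln (1 + f b)"
    using pdf_mono[of a b] pdf_nonneg[of a] assms ab by simp
  then have "ln (1 + f a) / ln (1 + r) \<le> ln (1 + f b) / ln (1 + r)"
    using ln_one_plus_r_pos by (simp add: divide_right_mono)
  ultimately show ?thesis
    unfolding potential_def by linarith
qed

lemma potential_jump:
  assumes "0 \<le> a" "a \<le> b" "threshold r (f a) < f b"
  shows "potential a + 1 \<le> potential b"
proof -
  have "(a + F a) / r \<le> (b + F b) / r"
    using cdf_mono[of a b] r_pos assms by (simp add: divide_right_mono)
  moreover have "(1 + r) * (1 + f a) < 1 + f b"
    using assms(3) by (simp add: threshold_def algebra_simps)
  then have "ln ((1 + r) * (1 + f a)) \<le> ln (1 + f b)"
    using pdf_nonneg[of a] r_pos by (intro ln_mono) auto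
  then have "ln (1 + r) + ln (1 + f a) \<le> ln (1 + f b)"
    using pdf_nonneg[of a] r_pos by (simp add: ln_mult)
  then have "ln (1 + f a) / ln (1 + r) + 1 \<le> ln (1 + f b) / ln (1 + r)"
    using ln_one_plus_r_pos by (intro divide_add_one_le) auto
  ultimately show ?thesis
    unfolding potential_def by linarith
qed

lemma potential_nonneg: "0 \<le> a \<Longrightarrow> 0 \<le> potential a"
  using cdf_nonneg[of a] pdf_nonneg[of a] r_pos ln_one_plus_r_pos by (simp add: potential_def)

lemma potential_le:
  assumes "0 \<le> a" "a < 1 - e"
  shows "potential a \<le> 2 / r + ln (1 + 1 / e) / ln (1 + r)"
proof -
  have "(a + F a) / r \<le> 2 / r"
    using assms cdf_le_1[of a] e r_pos by (simp add: divide_right_mono)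
  moreover have "f a * e \<le> 1"
    using pdf_gap_le_1[of a] mult_left_mono[of e "1 - a" "f a"] pdf_nonneg[of a] assms e by simp
  then have "ln (1 + f a) \<le> ln (1 + 1 / e)"
    using pdf_nonneg[of a] e by (simp add: field_simps)
  then have "ln (1 + f a) / ln (1 + r) \<le> ln (1 + 1 / e) / ln (1 + r)"
    using ln_one_plus_r_pos by (simp add: divide_right_mono)
  ultimately show ?thesis
    unfolding potential_def by linarith
qed

definition invariant :: "search_state \<Rightarrow> sample list \<Rightarrow> bool" where
  "invariant s h = (case s of
      Start \<Rightarrow> h = []
    | Walk a fa \<Rightarrow> a \<in> {0..1} \<and> fa = f a \<and> a \<in> fst ` set h \<and> (\<forall>v\<in>{0..<a}. covered f e h v)
    | Bisect a fa lo hi fhi k \<Rightarrow>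
        0 \<le> a \<and> a \<le> lo \<and> lo < hi \<and> hi \<le> 1 \<and> a < 1 - e \<and> fa = f a \<and> fhi = f hi
        \<and> f lo \<le> threshold r fa \<and> threshold r fa < fhi \<and> {a, lo, hi} \<subseteq> fst ` set h
        \<and> hi - a \<le> r / (1 + fa) \<and> hi - lo \<le> r / 2 ^ (B - k) \<and> k \<in> {1..B}
        \<and> (\<forall>v\<in>{0..<a}. covered f e h v))"

text \<open>The weight B + 1 lets each completed crossing pay for the bisection steps before it.\<close>

definition state_potential :: "search_state \<Rightarrow> real" where
  "state_potential s = (case s of
      Start \<Rightarrow> 0
    | Walk a fa \<Rightarrow> (real B + 1) * potential a
    | Bisect a fa lo hi fhi k \<Rightarrow> (real B + 1) * potential a + (real B + 1 - real k))"

definition finished :: "search_state \<Rightarrow> bool" where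
  "finished s = (case s of Walk a fa \<Rightarrow> 1 - e \<le> a | _ \<Rightarrow> False)"

lemma weighted_potential_step:
  "potential a + 1 \<le> potential b \<Longrightarrow> (real B + 1) * potential a + (real B + 1) \<le> (real B + 1) * potential b"
  using mult_left_mono[of "potential a + 1" "potential b" "real B + 1"] by (simp add: algebra_simps)

lemma start_step:
  assumes "invariant Start h"
  defines "x \<equiv> next_query e r Start"
  defines "s' \<equiv> next_state e r B Start x (f x)"
  shows "invariant s' (h @ [(x, F x, f x)]) \<and> 0 \<le> state_potential s'"
  using assms potential_nonneg[of 0]
  by (simp add: x_def s'_def next_query_def next_state_def invariant_def state_potential_def)

lemma finished_step:
  assumes "invariant s h" "finished s"
  defines "x \<equiv> next_query e r s"
  defines "s' \<equiv> next_state e r B s x (f x)"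
  shows "invariant s' (h @ [(x, F x, f x)]) \<and> finished s'"
  using assms covered_append
  by (cases s) (auto simp: x_def s'_def next_query_def next_state_def invariant_def finished_def)

lemma walk_step:
  assumes inv: "invariant (Walk a fa) h" and unfinished: "\<not> finished (Walk a fa)"
  defines "x \<equiv> next_query e r (Walk a fa)"
  defines "s' \<equiv> next_state e r B (Walk a fa) x (f x)"
  shows "invariant s' (h @ [(x, F x, f x)])
    \<and> (finished s' \<or> state_potential (Walk a fa) + 1 \<le> state_potential s')"
proof -
  let ?h' = "h @ [(x, F x, f x)]"
  from inv have a: "0 \<le> a" "a \<le> 1" and fa: "fa = f a" and "a \<in> fst ` set h"
    and "\<forall>v\<in>{0..<a}. covered f e h v"
    by (auto simp: invariant_def)
  then have queried: "a \<in> fst ` set ?h'" "x \<in> fst ` set ?h'"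
    and cov: "\<forall>v\<in>{0..<a}. covered f e ?h' v"
    using covered_append by auto
  have ae: "a < 1 - e"
    using unfinished by (simp add: finished_def)
  define w where "w = r / (1 + f a)"
  have w: "0 < w" "w \<le> r"
    using r_pos pdf_nonneg[of a] by (auto simp: w_def field_simps)
  have x: "x = min (a + w) 1"
    using ae by (simp add: x_def next_query_def w_def fa)
  have ax: "a < x" "x \<le> 1" "x - a \<le> w"
    using x w ae e by auto
  show ?thesis
  proof (cases "f x \<le> threshold r (f a)")
    case True
    then have s': "s' = Walk x (f x)"
      using ae by (simp add: s'_def next_state_def fa)
    have "\<forall>v\<in>{0..<x}. covered f e ?h' v"
      using True a ax e by (intro covered_below_extend[OF cov queried]) (auto simp: w_def)
    moreover have "finished s' \<or> state_potential (Walk a fa) + 1 \<le> state_potential s'"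
    proof (cases "a + w \<le> 1")
      case True
      then have "potential a + 1 \<le> potential x"
        using potential_walk_step[of a x] x a by (simp add: w_def)
      then show ?thesis
        using weighted_potential_step[of a x] by (simp add: s' state_potential_def)
    qed (use x s' e in \<open>simp add: finished_def\<close>)
    ultimately show ?thesis
      using s' a ax queried by (simp add: invariant_def)
  next
    case False
    then have s': "s' = Bisect a fa a x (f x) B"
      using ae by (simp add: s'_def next_state_def fa)
    have "invariant s' ?h'"
      using False a ax ae fa w queried cov B(1) r_pos pdf_nonneg[of a]
      by (auto simp: s' invariant_def threshold_def w_def)
    then show ?thesis
      by (simp add: s' state_potential_def)
  qed
qed

lemma bisect_step:
  assumes inv: "invariant (Bisect a fa lo hi fhi k) h"
  defines "x \<equiv> next_query e r (Bisect a fa lo hi fhi k)"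
  defines "s' \<equiv> next_state e r B (Bisect a fa lo hi fhi k) x (f x)"
  shows "invariant s' (h @ [(x, F x, f x)])
    \<and> state_potential (Bisect a fa lo hi fhi k) + 1 \<le> state_potential s'"
proof -
  let ?h' = "h @ [(x, F x, f x)]"
  from inv have a: "0 \<le> a" "a \<le> lo" "lo < hi" "hi \<le> 1" "a < 1 - e" and fa: "fa = f a"
    and fhi: "fhi = f hi" and thr: "f lo \<le> threshold r fa" "threshold r fa < f hi"
    and "{a, lo, hi} \<subseteq> fst ` set h" and wide: "hi - a \<le> r / (1 + fa)"
    and narrow: "hi - lo \<le> r / 2 ^ (B - k)" and k: "1 \<le> k" "k \<le> B"
    and "\<forall>v\<in>{0..<a}. covered f e h v"
    by (auto simp: invariant_def)
  then have queried: "{a, lo, hi, x} \<subseteq> fst ` set ?h'"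
    and cov: "\<forall>v\<in>{0..<a}. covered f e ?h' v"
    using covered_append by auto
  have "x = (lo + hi) / 2"
    by (simp add: x_def next_query_def)
  then obtain lo' hi' where s': "s' = bisect_continue k a fa lo' hi' (f hi')"
    and bracket: "lo \<le> lo'" "lo' < hi'" "hi' \<le> hi" "hi' - lo' = (hi - lo) / 2"
    and thr': "f lo' \<le> threshold r fa" "threshold r fa < f hi'"
    and "{lo', hi'} \<subseteq> {lo, hi, x}"
    using bisect_next_bracket[of lo hi f r fa] a thr unfolding s'_def fhi by blast
  then have queried': "{lo', hi'} \<subseteq> fst ` set ?h'"
    using queried by blast
  have "B - (k - 1) = Suc (B - k)"
    using k by simp
  then have halved: "hi' - lo' \<le> r / 2 ^ (B - (k - 1))"
    using bracket(4) narrow by simp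
  show ?thesis
  proof (cases "k \<le> 1")
    case True
    then have s'_walk: "s' = Walk hi' (f hi')"
      by (simp add: s' bisect_continue_def)
    have "hi' - lo' \<le> e"
      using halved True k r_div_two_power_B_le by simp
    then have "\<forall>v\<in>{0..<hi'}. covered f e ?h' v"
      using a bracket thr' wide queried queried'
      by (intro covered_below_extend[OF cov]) (auto simp: fa)
    moreover have "potential a + 1 \<le> potential hi'"
      using a bracket thr' by (intro potential_jump) (auto simp: fa)
    ultimately show ?thesis
      using a bracket queried' True k weighted_potential_step[of a hi']
      by (simp add: s'_walk invariant_def state_potential_def)
  next
    case False
    then have s'_bisect: "s' = Bisect a fa lo' hi' (f hi') (k - 1)"
      by (simp add: s' bisect_continue_def)
    have "k - 1 \<in> {1..B}" "real (k - 1) = real k - 1"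
      using False k by auto
    then show ?thesis
      using a bracket fa thr' wide halved queried queried' cov
      by (simp add: s'_bisect invariant_def state_potential_def)
  qed
qed

lemma next_state_progress:
  assumes "invariant s h" "s \<noteq> Start"
  defines "x \<equiv> next_query e r s"
  defines "s' \<equiv> next_state e r B s x (f x)"
  shows "invariant s' (h @ [(x, F x, f x)])
    \<and> (if finished s then finished s' else finished s' \<or> state_potential s + 1 \<le> state_potential s')"
proof (cases s)
  case (Walk a fa)
  then show ?thesis
    using walk_step[of a fa h] finished_step[of s h] assms by (cases "finished s") auto
next
  case (Bisect a fa lo hi fhi k)
  then show ?thesis
    using bisect_step[of a fa lo hi fhi k h] assms by (simp add: finished_def)
qed (use assms in simp)

abbreviation history :: "nat \<Rightarrow> sample list" where
  "history n \<equiv> run (walk_query e r B) F f n"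

abbreviation state :: "nat \<Rightarrow> search_state" where
  "state n \<equiv> state_of e r B (history n)"

lemma run_progress:
  "invariant (state n) (history n)
    \<and> (0 < n \<longrightarrow> state n \<noteq> Start \<and> (finished (state n) \<or> real n - 1 \<le> state_potential (state n)))"
proof (induction n)
  case 0
  show ?case by (simp add: state_of_def invariant_def)
next
  case (Suc n)
  define x where "x = next_query e r (state n)"
  have history: "history (Suc n) = history n @ [(x, F x, f x)]"
    by (rule run_walk_query_Suc) (simp add: x_def)
  have state: "state (Suc n) = next_state e r B (state n) x (f x)"
    unfolding history by (rule state_of_snoc)
  have IH: "invariant (state n) (history n)"
    "0 < n \<Longrightarrow> state n \<noteq> Start \<and> (finished (state n) \<or> real n - 1 \<le> state_potential (state n))"
    using Suc.IH by auto
  have "invariant (next_state e r B (state n) x (f x)) (history n @ [(x, F x, f x)])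
    \<and> (finished (next_state e r B (state n) x (f x))
      \<or> real n \<le> state_potential (next_state e r B (state n) x (f x)))"
  proof (cases "n = 0")
    case True
    then have "state n = Start"
      by (simp add: state_of_def)
    then show ?thesis
      using start_step[of "history n"] IH(1) True by (simp add: x_def)
  next
    case False
    then have "state n \<noteq> Start" "finished (state n) \<or> real n - 1 \<le> state_potential (state n)"
      using IH(2) by auto
    then show ?thesis
      using next_state_progress[OF IH(1)] unfolding x_def by (auto split: if_splits)
  qed
  then show ?case
    using next_state_not_Start unfolding history state[unfolded history] by simp
qed

lemma state_potential_le:
  assumes "invariant s h" "s \<noteq> Start" "\<not> finished s"
  shows "state_potential s \<le> (real B + 1) * (2 / r + ln (1 + 1 / e) / ln (1 + r) + 1)"
proof -
  define P where "P = 2 / r + ln (1 + 1 / e) / ln (1 + r)"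
  have weighted: "(real B + 1) * potential a + (real B + 1) \<le> (real B + 1) * (P + 1)"
    if "0 \<le> a" "a < 1 - e" for a
    using mult_left_mono[OF potential_le[OF that], of "real B + 1"] by (simp add: P_def algebra_simps)
  show ?thesis
  proof (cases s)
    case (Walk a fa)
    then show ?thesis
      using assms potential_le[of a] by (simp add: invariant_def finished_def state_potential_def)
  next
    case (Bisect a fa lo hi fhi k)
    then show ?thesis
      using assms weighted[of a] by (simp add: invariant_def state_potential_def P_def)
  qed (use assms in simp)
qed

lemma walk_query_learns:
  assumes n: "(real B + 1) * (2 / r + ln (1 + 1 / e) / ln (1 + r) + 1) < real n - 1"
  shows "is_cdf (tangent_envelope (history n)) \<and> levy F (tangent_envelope (history n)) \<le> e"
proof -
  have "0 \<le> (real B + 1) * (2 / r + ln (1 + 1 / e) / ln (1 + r) + 1)"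
    using r_pos e ln_one_plus_r_pos by simp
  then have "0 < n"
    using n by linarith
  then have inv: "invariant (state n) (history n)" and "state n \<noteq> Start"
    and "finished (state n) \<or> real n - 1 \<le> state_potential (state n)"
    using run_progress[of n] by auto
  then have "finished (state n)"
    using state_potential_le[OF inv] n by fastforce
  then obtain a fa where "state n = Walk a fa" "1 - e \<le> a"
    by (cases "state n") (auto simp: finished_def)
  then have "\<forall>v\<in>{0..<1}. covered f e (history n) v"
    using inv covered_near[of a "history n"] by (auto simp: invariant_def not_less)
  then show ?thesis
    using levy_tangent_envelope_le[OF exact_samples_run] is_cdf_tangent_envelope e by auto
qed

end

section \<open>Query count\<close>

lemma bisection_depth_le:
  fixes \<epsilon> :: real
  assumes \<epsilon>: "0 < \<epsilon>" "\<epsilon> < 1"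
  shows "real (nat \<lceil>log 2 (1 / \<epsilon>)\<rceil> + 1) + 1 \<le> 3 * (1 + ln (1 / \<epsilon>))"
proof -
  have "log 2 (1 / \<epsilon>) = ln (1 / \<epsilon>) / ln 2"
    by (simp add: log_def)
  also have "\<dots> \<le> ln (1 / \<epsilon>) / (2 / 3)"
    using ln2_ge_two_thirds \<epsilon> by (intro divide_left_mono) auto
  finally have "log 2 (1 / \<epsilon>) \<le> 3 / 2 * ln (1 / \<epsilon>)"
    by simp
  moreover have "real (nat \<lceil>log 2 (1 / \<epsilon>)\<rceil> + 1) = of_int \<lceil>log 2 (1 / \<epsilon>)\<rceil> + 1"
    using \<epsilon> by simp
  moreover have "0 \<le> ln (1 / \<epsilon>)"
    using \<epsilon> by simp
  ultimately show ?thesis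
    using conjunct1[OF ceiling_correct[of "log 2 (1 / \<epsilon>)"]] by argo
qed

lemma ln_one_plus_inverse_le:
  fixes \<epsilon> :: real
  assumes \<epsilon>: "0 < \<epsilon>" "\<epsilon> < 1"
  shows "ln (1 + 1 / \<epsilon>) \<le> 1 + ln (1 / \<epsilon>)"
proof -
  have "ln (1 + 1 / \<epsilon>) \<le> ln (2 / \<epsilon>)"
    using \<epsilon> by (intro ln_mono) (auto simp: field_simps)
  also have "\<dots> = ln 2 + ln (1 / \<epsilon>)"
    using \<epsilon> by (simp add: ln_div)
  finally show ?thesis
    using ln_2_less_1 by linarith
qed

lemma walk_query_budget:
  fixes \<epsilon> :: real
  assumes \<epsilon>: "0 < \<epsilon>" "\<epsilon> < 1"
  defines "B \<equiv> nat \<lceil>log 2 (1 / \<epsilon>)\<rceil> + 1"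
  shows "(real B + 1) * (2 / sqrt \<epsilon> + ln (1 + 1 / \<epsilon>) / ln (1 + sqrt \<epsilon>) + 1) + 3
    \<le> 20 * \<epsilon> powr (-1/2) * (1 + ln (1 / \<epsilon>)) ^ 2"
proof -
  define L where "L = ln (1 / \<epsilon>)"
  define s where "s = sqrt \<epsilon>"
  define q where "q = (1 + L) / s"
  have L: "0 \<le> L"
    using \<epsilon> by (simp add: L_def)
  have s: "0 < s" "s \<le> 1"
    using \<epsilon> by (auto simp: s_def)
  have q: "1 \<le> q" "2 / s \<le> 2 * q"
    using L s by (auto simp: q_def field_simps)
  have B: "real B + 1 \<le> 3 * (1 + L)"
    using bisection_depth_le[OF \<epsilon>] by (simp add: B_def L_def)
  have "ln (1 + 1 / \<epsilon>) \<le> 1 + L"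
    using ln_one_plus_inverse_le[OF \<epsilon>] by (simp add: L_def)
  then have "ln (1 + 1 / \<epsilon>) / ln (1 + s) \<le> (1 + L) / (s / 2)"
    using ln_one_plus_ge_half[of s] s L by (intro frac_le) auto
  also have "\<dots> = 2 * q"
    by (simp add: q_def)
  finally have inner: "2 / s + ln (1 + 1 / \<epsilon>) / ln (1 + s) + 1 \<le> 5 * q"
    using q by linarith
  have "0 \<le> 2 / s + ln (1 + 1 / \<epsilon>) / ln (1 + s) + 1"
    using \<epsilon> s by simp
  then have "(real B + 1) * (2 / s + ln (1 + 1 / \<epsilon>) / ln (1 + s) + 1) \<le> (3 * (1 + L)) * (5 * q)"
    using B inner by (intro mult_mono) auto
  moreover have "1 \<le> (1 + L) * q"
    using mult_mono[of 1 "1 + L" 1 q] L q by simp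
  moreover have "\<epsilon> powr (-1/2) = 1 / s"
    using \<epsilon> by (simp add: s_def powr_minus_divide powr_half_sqrt)
  then have "\<epsilon> powr (-1/2) * (1 + L) ^ 2 = (1 + L) * q"
    by (simp add: q_def power2_eq_square)
  moreover have "(3 * (1 + L)) * (5 * q) = 15 * ((1 + L) * q)"
    by simp
  ultimately show ?thesis
    unfolding s_def[symmetric] L_def[symmetric] by argo
qed

lemma convex_cdf_learnable:
  fixes \<epsilon> :: real
  assumes \<epsilon>: "0 < \<epsilon>" "\<epsilon> < 1"
  shows "\<exists>(n::nat) (Q :: sample list \<Rightarrow> real) (A :: sample list \<Rightarrow> real \<Rightarrow> real).
    real n \<le> 20 * \<epsilon> powr (-1/2) * (1 + ln (1 / \<epsilon>)) ^ 2 \<and>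
    (\<forall>F f. smooth_dist_01 F f \<and> convex_on {0..1} F \<longrightarrow>
      is_cdf (A (run Q F f n)) \<and> levy F (A (run Q F f n)) \<le> \<epsilon>)"
proof -
  define B where "B = nat \<lceil>log 2 (1 / \<epsilon>)\<rceil> + 1"
  define K where "K = (real B + 1) * (2 / sqrt \<epsilon> + ln (1 + 1 / \<epsilon>) / ln (1 + sqrt \<epsilon>) + 1)"
  define n where "n = nat \<lceil>K\<rceil> + 2"
  have "0 \<le> K"
    using \<epsilon> by (simp add: K_def)
  then have n: "K < real n - 1" "real n \<le> K + 3"
    unfolding n_def by linarith+
  have "1 / \<epsilon> \<le> 2 ^ nat \<lceil>log 2 (1 / \<epsilon>)\<rceil>"
    using \<epsilon> by (intro le_two_power_ceiling_log) simp
  also have "\<dots> \<le> 2 ^ B"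
    unfolding B_def by (rule power_increasing[OF le_add1]) simp
  finally have "1 / \<epsilon> \<le> 2 ^ B" .
  moreover have "1 \<le> B"
    by (simp add: B_def)
  ultimately have "walk_learner F f \<epsilon> (sqrt \<epsilon>) B" if "smooth_dist_01 F f" "convex_on {0..1} F" for F f
    using that \<epsilon> by unfold_locales auto
  then have "is_cdf (tangent_envelope (run (walk_query \<epsilon> (sqrt \<epsilon>) B) F f n))
      \<and> levy F (tangent_envelope (run (walk_query \<epsilon> (sqrt \<epsilon>) B) F f n)) \<le> \<epsilon>"
    if "smooth_dist_01 F f" "convex_on {0..1} F" for F f
    using walk_learner.walk_query_learns n(1) that unfolding K_def by blast
  moreover have "real n \<le> 20 * \<epsilon> powr (-1/2) * (1 + ln (1 / \<epsilon>)) ^ 2"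
    using walk_query_budget[OF \<epsilon>] n(2) unfolding K_def B_def by linarith
  ultimately show ?thesis
    by blast
qed

theorem theorem6:
  shows "\<exists>C > 0. \<exists>k::nat. \<exists>c > 0. \<forall>\<epsilon>::real. 0 < \<epsilon> \<and> \<epsilon> < 1 \<longrightarrow>
    (\<exists>(n::nat) (Q :: (real \<times> real \<times> real) list \<Rightarrow> real)
        (A :: (real \<times> real \<times> real) list \<Rightarrow> (real \<Rightarrow> real)).
       real n \<le> C * \<epsilon> powr (-1/2) * (1 + ln (1/\<epsilon>)) ^ k \<and>
       (\<forall>F f. smooth_dist_01 F f \<and> convex_on {0..1} F \<longrightarrow>
          is_cdf (A (run Q F f n)) \<and> levy F (A (run Q F f n)) \<le> c * \<epsilon>))"
  using convex_cdf_learnable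
  by (intro exI[of _ 20] conjI exI[of _ 2] exI[of _ 1]) auto

end
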